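(* Fix integers $n\ge 1$ and a real number $p\ge 1$. For $\mathbf{c}\in\mathbb{R}^n$ and $r>0$ let $\mathrm{ball}(\mathbf{c},r)=\{\mathbf{x}\in\mathbb{R}^n:\|\mathbf{x}-\mathbf{c}\|\le r\}$, and let $\mathcal{B}^n$ be the set of all such balls, equipped with the depth dissimilarity $$d_{\mathrm{dep}}(\mathrm{ball}(\mathbf{c}_1,r_1),\mathrm{ball}(\mathbf{c}_2,r_2))=\frac{\|\mathbf{c}_1-\mathbf{c}_2\|_p^p+|r_1-r_2|^p}{r_1\, r_2}.$$ Then: (1) For any $B_1,B_2\in\mathcal{B}^n$ and any $\Delta>0$ there exists $r_0>0$ such that for every ball $\mathrm{ball}(\mathbf{c}',r')\subseteq B_2$ with $r'\le r_0$, $$d_{\mathrm{dep}}(B_1,\mathrm{ball}(\mathbf{c}',r'))>d_{\mathrm{dep}}(B_1,B_2)+\Delta.$$ (2) For any $B\in\mathcal{B}^n$, any positive integer $N$ and any $M>0$, there exist balls $B_1,\dots,B_N\in\mathcal{B}^n$ with $B_i\subseteq B$ for all $i$, such that $d_{\mathrm{dep}}(B_i,B_j)>M$ for all distinct $i,j\in\{1,\dots,N\}$. The same conclusions hold for boxes: for $\mathbf{c}\in\mathbb{R}^n$ and $\mathbf{o}\in(\mathbb{R}_{>0})^n$ let $\mathrm{box}(\mathbf{c},\mathbf{o})=\{\mathbf{x}\in\mathbb{R}^n:\mathbf{c}-\mathbf{o}\le\mathbf{x}\le\mathbf{c}+\mathbf{o}\}$ (componentwise inequalities), with depth dissimilarity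 $$d_{\mathrm{dep}}(\mathrm{box}(\mathbf{c}_1,\mathbf{o}_1),\mathrm{box}(\mathbf{c}_2,\mathbf{o}_2))=\frac{\|\mathbf{c}_1-\mathbf{c}_2\|_p^p+\|\mathbf{o}_1-\mathbf{o}_2\|_p^p}{\|\mathbf{o}_1\|\,\|\mathbf{o}_2\|};$$ then (1) holds with "there exists $r_0>0$" replaced by "there exists $\mathbf{o}_0\in(\mathbb{R}_{>0})^n$" and the condition $r'\le r_0$ replaced by $\mathbf{o}'\le\mathbf{o}_0$ componentwise for boxes $\mathrm{box}(\mathbf{c}',\mathbf{o}')\subseteq B_2$, and (2) holds with balls replaced by boxes throughout.
   Context: $\|\cdot\|_p$ denotes the $p$-norm, $\|\mathbf{x}\|_p=(\sum_i|x_i|^p)^{1/p}$; $\|\cdot\|$ without subscript denotes the Euclidean norm. *)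

theory Defs
  imports "HOL-Analysis.Analysis"
begin

definition pnorm_pow :: "real \<Rightarrow> real ^ 'n \<Rightarrow> real" where
  "pnorm_pow p x = (\<Sum>i\<in>UNIV. \<bar>x $ i\<bar> powr p)"

definition ballset :: "real ^ 'n \<Rightarrow> real \<Rightarrow> (real ^ 'n) set" where
  "ballset c r = {x. norm (x - c) \<le> r}"

definition boxset :: "real ^ 'n \<Rightarrow> real ^ 'n \<Rightarrow> (real ^ 'n) set" where
  "boxset c w = {x. \<forall>i. c $ i - w $ i \<le> x $ i \<and> x $ i \<le> c $ i + w $ i}"

definition pos_vec :: "real ^ 'n \<Rightarrow> bool" where
  "pos_vec w \<longleftrightarrow> (\<forall>i. w $ i > 0)"

definition dep_ball :: "real \<Rightarrow> real ^ 'n \<Rightarrow> real \<Rightarrow> real ^ 'n \<Rightarrow> real \<Rightarrow> real" where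
  "dep_ball p c1 r1 c2 r2 = (pnorm_pow p (c1 - c2) + \<bar>r1 - r2\<bar> powr p) / (r1 * r2)"

definition dep_box :: "real \<Rightarrow> real ^ 'n \<Rightarrow> real ^ 'n \<Rightarrow> real ^ 'n \<Rightarrow> real ^ 'n \<Rightarrow> real" where
  "dep_box p c1 w1 c2 w2 = (pnorm_pow p (c1 - c2) + pnorm_pow p (w1 - w2)) / (norm w1 * norm w2)"

end

theory Submission
  imports Defs
begin

text \<open>
  If one ball (box) shrinks
  while the other stays fixed, the size difference keeps the numerator bounded below by a
  positive constant, so the dissimilarity blows up. For many pairwise far-apart subsets, place \<open>N\<close> equal, tiny copies at the
  points \<open>c + i h e\<^sub>k\<close>: each pair of centres differs by at least \<open>h\<close> in the
  \<open>k\<close>-th coordinate, so the numerator is at least \<open>h\<^sup>p\<close>, while the denominator is of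
  order \<open>\<rho>\<^sup>2\<close> in the common size \<open>\<rho>\<close>.
\<close>

lemma pnorm_pow_nonneg: "0 \<le> pnorm_pow p x"
  unfolding pnorm_pow_def by (simp add: sum_nonneg)

lemma powr_le_pnorm_pow:
  assumes "0 \<le> p" "0 \<le> a" "a \<le> \<bar>x $ k\<bar>"
  shows "a powr p \<le> pnorm_pow p x"
proof -
  have "a powr p \<le> \<bar>x $ k\<bar> powr p"
    using assms by (intro powr_mono2)
  also have "\<dots> \<le> pnorm_pow p x"
    unfolding pnorm_pow_def by (rule member_le_sum) auto
  finally show ?thesis .
qed

lemma pos_vec_norm_pos: "pos_vec w \<Longrightarrow> 0 < norm w"
  unfolding pos_vec_def by (metis less_irrefl zero_index zero_less_norm_iff)

lemma ballset_subset_ballset: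
  assumes "norm (c' - c) + r' \<le> r"
  shows "ballset c' r' \<subseteq> ballset c r"
proof
  fix x assume "x \<in> ballset c' r'"
  then have "norm (x - c') \<le> r'" by (simp add: ballset_def)
  moreover have "norm (x - c) \<le> norm (x - c') + norm (c' - c)"
    using norm_triangle_ineq[of "x - c'" "c' - c"] by simp
  ultimately show "x \<in> ballset c r"
    using assms by (simp add: ballset_def)
qed

lemma boxset_subset_boxset:
  assumes "\<And>i. \<bar>c' $ i - c $ i\<bar> + w' $ i \<le> w $ i"
  shows "boxset c' w' \<subseteq> boxset c w"
proof
  fix x assume x: "x \<in> boxset c' w'"
  have "c $ i - w $ i \<le> x $ i \<and> x $ i \<le> c $ i + w $ i" for i
  proof -
    have "c' $ i - w' $ i \<le> x $ i" "x $ i \<le> c' $ i + w' $ i"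
      using x by (simp_all add: boxset_def)
    then show ?thesis
      using assms[of i] by arith
  qed
  then show "x \<in> boxset c w"
    by (simp add: boxset_def)
qed

lemma quotient_gt_if_denominator_small:
  fixes A X :: real
  assumes "0 < A"
  obtains s0 where "0 < s0" "\<And>s D. 0 < s \<Longrightarrow> s \<le> s0 \<Longrightarrow> A \<le> D \<Longrightarrow> X < D / s"
proof
  show "0 < A / (\<bar>X\<bar> + 1)"
    using assms by simp
  fix s D :: real
  assume s: "0 < s" "s \<le> A / (\<bar>X\<bar> + 1)" and "A \<le> D"
  have "X * s \<le> \<bar>X\<bar> * s"
    using s by (simp add: mult_right_mono)
  also have "\<dots> < (\<bar>X\<bar> + 1) * s"
    using s by simp
  also have "\<dots> \<le> A"
    using s by (simp add: field_simps)
  finally show "X < D / s"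
    using s \<open>A \<le> D\<close> by (simp add: pos_less_divide_eq)
qed

lemma dep_ball_gt_if_radius_small:
  fixes c1 :: "real ^ 'n"
  assumes "0 \<le> p" "0 < r1"
  shows "\<exists>r0 > 0. \<forall>c' r'. 0 < r' \<longrightarrow> r' \<le> r0 \<longrightarrow> X < dep_ball p c1 r1 c' r'"
proof -
  obtain s0 where "0 < s0"
    and s0: "\<And>s D. 0 < s \<Longrightarrow> s \<le> s0 \<Longrightarrow> (r1 / 2) powr p \<le> D \<Longrightarrow> X < D / s"
    using quotient_gt_if_denominator_small[of "(r1 / 2) powr p"] assms by auto
  have "X < dep_ball p c1 r1 c' r'" if r': "0 < r'" "r' \<le> min (r1 / 2) (s0 / r1)" for c' r'
  proof -
    have "r1 * r' \<le> s0"
      using r' assms by (simp add: field_simps)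
    have "(r1 / 2) powr p \<le> \<bar>r1 - r'\<bar> powr p"
      using r' assms by (intro powr_mono2) auto
    then have "(r1 / 2) powr p \<le> pnorm_pow p (c1 - c') + \<bar>r1 - r'\<bar> powr p"
      using pnorm_pow_nonneg[of p "c1 - c'"] by linarith
    then show ?thesis
      unfolding dep_ball_def using s0 \<open>r1 * r' \<le> s0\<close> r' assms by simp
  qed
  moreover have "0 < min (r1 / 2) (s0 / r1)"
    using \<open>0 < s0\<close> assms by simp
  ultimately show ?thesis by blast
qed

lemma dep_box_gt_if_widths_small:
  fixes c1 w1 :: "real ^ 'n"
  assumes "0 \<le> p" "pos_vec w1"
  shows "\<exists>w0. pos_vec w0 \<and>
    (\<forall>c' w'. pos_vec w' \<longrightarrow> (\<forall>i. w' $ i \<le> w0 $ i) \<longrightarrow> X < dep_box p c1 w1 c' w')"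
proof -
  fix k :: 'n
  define a where "a = w1 $ k / 2"
  have "0 < a"
    using assms by (simp add: a_def pos_vec_def)
  obtain s0 where "0 < s0"
    and s0: "\<And>s D. 0 < s \<Longrightarrow> s \<le> s0 \<Longrightarrow> a powr p \<le> D \<Longrightarrow> X < D / s"
    using quotient_gt_if_denominator_small[of "a powr p"] \<open>0 < a\<close> by auto
  define t where "t = min a (s0 / (norm w1 * norm (1 :: real ^ 'n)))"
  have "0 < norm w1"
    using assms pos_vec_norm_pos by blast
  then have "0 < t"
    using \<open>0 < a\<close> \<open>0 < s0\<close> by (simp add: t_def)
  have "X < dep_box p c1 w1 c' w'"
    if w': "pos_vec w'" "\<forall>i. w' $ i \<le> (t *\<^sub>R 1) $ i" for c' w'
  proof -
    have "norm w' \<le> norm (t *\<^sub>R (1 :: real ^ 'n))"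
      using w' \<open>0 < t\<close> by (intro norm_le_componentwise_cart) (simp add: pos_vec_def less_imp_le)
    also have "\<dots> = t * norm (1 :: real ^ 'n)"
      using \<open>0 < t\<close> by simp
    also have "\<dots> \<le> s0 / (norm w1 * norm (1 :: real ^ 'n)) * norm (1 :: real ^ 'n)"
      by (intro mult_right_mono) (auto simp: t_def)
    also have "\<dots> = s0 / norm w1"
      by simp
    finally have "norm w1 * norm w' \<le> s0"
      using \<open>0 < norm w1\<close> by (simp add: field_simps)
    have "w' $ k \<le> a"
      using w' by (simp add: t_def)
    then have "a powr p \<le> pnorm_pow p (w1 - w')"
      using assms \<open>0 < a\<close> by (intro powr_le_pnorm_pow[where k = k]) (auto simp: a_def)
    then have "a powr p \<le> pnorm_pow p (c1 - c') + pnorm_pow p (w1 - w')"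
      using pnorm_pow_nonneg[of p "c1 - c'"] by linarith
    then show ?thesis
      unfolding dep_box_def
      using s0 \<open>norm w1 * norm w' \<le> s0\<close> \<open>0 < norm w1\<close> pos_vec_norm_pos[OF w'(1)] by simp
  qed
  moreover have "pos_vec (t *\<^sub>R (1 :: real ^ 'n))"
    using \<open>0 < t\<close> by (simp add: pos_vec_def)
  ultimately show ?thesis by blast
qed

lemma powr_le_pnorm_pow_axis_grid:
  fixes c :: "real ^ 'n"
  assumes "0 \<le> p" "0 \<le> h" "i \<noteq> j"
  shows "h powr p \<le> pnorm_pow p ((c + (real i * h) *\<^sub>R axis k 1) - (c + (real j * h) *\<^sub>R axis k 1))"
proof (rule powr_le_pnorm_pow[where k = k])
  have "1 \<le> \<bar>real i - real j\<bar>"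
    using assms by linarith
  then have "h \<le> \<bar>real i - real j\<bar> * h"
    using assms by (simp add: mult_le_cancel_right1)
  then show "h \<le> \<bar>((c + (real i * h) *\<^sub>R axis k 1) - (c + (real j * h) *\<^sub>R axis k 1)) $ k\<bar>"
    using assms by (simp add: axis_def abs_mult flip: left_diff_distrib)
qed (use assms in auto)

lemma separated_subballs:
  fixes c :: "real ^ 'n" and N :: nat
  assumes "0 \<le> p" "0 < r"
  shows "\<exists>cs rs. (\<forall>i\<in>{1..N}. rs i > 0 \<and> ballset (cs i) (rs i) \<subseteq> ballset c r) \<and>
    (\<forall>i\<in>{1..N}. \<forall>j\<in>{1..N}. i \<noteq> j \<longrightarrow> dep_ball p (cs i) (rs i) (cs j) (rs j) > M)"
proof -
  fix k :: 'n
  define h where "h = r / (2 * (real N + 1))"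
  define cs where "cs i = c + (real i * h) *\<^sub>R axis k 1" for i
  have "0 < h"
    using assms by (simp add: h_def)
  obtain s0 where "0 < s0"
    and s0: "\<And>s D. 0 < s \<Longrightarrow> s \<le> s0 \<Longrightarrow> h powr p \<le> D \<Longrightarrow> M < D / s"
    using quotient_gt_if_denominator_small[of "h powr p"] \<open>0 < h\<close> by auto
  define \<rho> where "\<rho> = min (r / 2) (min 1 s0)"
  have "0 < \<rho>"
    using assms \<open>0 < s0\<close> by (simp add: \<rho>_def)
  have "ballset (cs i) \<rho> \<subseteq> ballset c r" if "i \<le> N" for i
  proof (rule ballset_subset_ballset)
    have "norm (cs i - c) = real i * h"
      using \<open>0 < h\<close> by (simp add: cs_def)
    also have "\<dots> \<le> (real N + 1) * h"
      using that \<open>0 < h\<close> by (intro mult_right_mono) auto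
    also have "\<dots> = r / 2"
      by (simp add: h_def field_simps)
    finally show "norm (cs i - c) + \<rho> \<le> r"
      unfolding \<rho>_def by linarith
  qed
  moreover have "M < dep_ball p (cs i) \<rho> (cs j) \<rho>" if "i \<noteq> j" for i j
  proof -
    have "\<rho> * \<rho> \<le> s0"
      using \<open>0 < \<rho>\<close> mult_left_le[of \<rho> \<rho>] by (simp add: \<rho>_def)
    moreover have "h powr p \<le> pnorm_pow p (cs i - cs j)"
      unfolding cs_def using assms \<open>0 < h\<close> that by (intro powr_le_pnorm_pow_axis_grid) auto
    ultimately have "M < pnorm_pow p (cs i - cs j) / (\<rho> * \<rho>)"
      using \<open>0 < \<rho>\<close> by (intro s0) auto
    then show ?thesis
      by (simp add: dep_ball_def)
  qed
  ultimately show ?thesis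
    using \<open>0 < \<rho>\<close> by (intro exI[of _ cs] exI[of _ "\<lambda>_. \<rho>"]) auto
qed

lemma separated_subboxes:
  fixes c w :: "real ^ 'n" and N :: nat
  assumes "0 \<le> p" "pos_vec w"
  shows "\<exists>cs ws. (\<forall>i\<in>{1..N}. pos_vec (ws i) \<and> boxset (cs i) (ws i) \<subseteq> boxset c w) \<and>
    (\<forall>i\<in>{1..N}. \<forall>j\<in>{1..N}. i \<noteq> j \<longrightarrow> dep_box p (cs i) (ws i) (cs j) (ws j) > M)"
proof -
  fix k :: 'n
  define h where "h = w $ k / (2 * (real N + 1))"
  define cs where "cs i = c + (real i * h) *\<^sub>R axis k 1" for i
  have "0 < h"
    using assms by (simp add: h_def pos_vec_def)
  have "0 < norm w"
    using assms pos_vec_norm_pos by blast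
  obtain s0 where "0 < s0"
    and s0: "\<And>s D. 0 < s \<Longrightarrow> s \<le> s0 \<Longrightarrow> h powr p \<le> D \<Longrightarrow> M < D / s"
    using quotient_gt_if_denominator_small[of "h powr p"] \<open>0 < h\<close> by auto
  define \<rho> where "\<rho> = min (1 / 2) (s0 / (norm w * norm w))"
  have "0 < \<rho>"
    using \<open>0 < s0\<close> \<open>0 < norm w\<close> by (simp add: \<rho>_def)
  have "\<rho> \<le> 1 / 2"
    unfolding \<rho>_def by (rule min.cobounded1)
  have "boxset (cs i) (\<rho> *\<^sub>R w) \<subseteq> boxset c w" if "i \<le> N" for i
  proof (rule boxset_subset_boxset)
    fix l
    have "\<bar>cs i $ l - c $ l\<bar> \<le> w $ l / 2"
    proof (cases "l = k")
      case True
      have "real i * h \<le> (real N + 1) * h"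
        using that \<open>0 < h\<close> by (intro mult_right_mono) auto
      also have "\<dots> = w $ k / 2"
        by (simp add: h_def field_simps)
      finally show ?thesis
        using True \<open>0 < h\<close> by (simp add: cs_def)
    next
      case False
      then show ?thesis
        using assms by (simp add: cs_def axis_def pos_vec_def less_imp_le)
    qed
    moreover have "\<rho> * w $ l \<le> 1 / 2 * w $ l"
      using assms \<open>\<rho> \<le> 1 / 2\<close> by (intro mult_right_mono) (auto simp: pos_vec_def less_imp_le)
    ultimately show "\<bar>cs i $ l - c $ l\<bar> + (\<rho> *\<^sub>R w) $ l \<le> w $ l"
      by simp
  qed
  moreover have "M < dep_box p (cs i) (\<rho> *\<^sub>R w) (cs j) (\<rho> *\<^sub>R w)" if "i \<noteq> j" for i j
  proof -
    have "norm (\<rho> *\<^sub>R w) * norm (\<rho> *\<^sub>R w) = \<rho> * \<rho> * (norm w * norm w)"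
      using \<open>0 < \<rho>\<close> by simp
    also have "\<dots> \<le> \<rho> * (norm w * norm w)"
      using \<open>0 < \<rho>\<close> \<open>\<rho> \<le> 1 / 2\<close> by (intro mult_right_mono) auto
    also have "\<dots> \<le> s0 / (norm w * norm w) * (norm w * norm w)"
      unfolding \<rho>_def by (intro mult_right_mono min.cobounded2) simp
    also have "\<dots> = s0"
      using \<open>0 < norm w\<close> by simp
    finally have "norm (\<rho> *\<^sub>R w) * norm (\<rho> *\<^sub>R w) \<le> s0" .
    moreover have "h powr p \<le> pnorm_pow p (cs i - cs j)"
      unfolding cs_def using assms \<open>0 < h\<close> that by (intro powr_le_pnorm_pow_axis_grid) auto
    ultimately have "M < pnorm_pow p (cs i - cs j) / (norm (\<rho> *\<^sub>R w) * norm (\<rho> *\<^sub>R w))"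
      using \<open>0 < \<rho>\<close> \<open>0 < norm w\<close> by (intro s0) auto
    then show ?thesis
      by (simp add: dep_box_def pnorm_pow_def)
  qed
  moreover have "pos_vec (\<rho> *\<^sub>R w)"
    using assms \<open>0 < \<rho>\<close> by (simp add: pos_vec_def)
  ultimately show ?thesis
    by (intro exI[of _ cs] exI[of _ "\<lambda>_. \<rho> *\<^sub>R w"]) auto
qed

theorem theorem1:
  fixes p :: real
  assumes "p \<ge> 1"
  shows
   "(\<forall>(c1::real^'n) r1 c2 r2 \<Delta>. r1 > 0 \<longrightarrow> r2 > 0 \<longrightarrow> \<Delta> > 0 \<longrightarrow>
      (\<exists>r0 > 0. \<forall>c' r'. r' > 0 \<longrightarrow> ballset c' r' \<subseteq> ballset c2 r2 \<longrightarrow> r' \<le> r0 \<longrightarrow>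
          dep_ball p c1 r1 c' r' > dep_ball p c1 r1 c2 r2 + \<Delta>))
  \<and> (\<forall>(c::real^'n) r (N::nat) M. r > 0 \<longrightarrow> N \<ge> 1 \<longrightarrow> M > 0 \<longrightarrow>
      (\<exists>cs rs. (\<forall>i\<in>{1..N}. rs i > 0 \<and> ballset (cs i) (rs i) \<subseteq> ballset c r) \<and>
        (\<forall>i\<in>{1..N}. \<forall>j\<in>{1..N}. i \<noteq> j \<longrightarrow> dep_ball p (cs i) (rs i) (cs j) (rs j) > M)))
  \<and> (\<forall>(c1::real^'n) w1 c2 w2 \<Delta>. pos_vec w1 \<longrightarrow> pos_vec w2 \<longrightarrow> \<Delta> > 0 \<longrightarrow>
      (\<exists>w0. pos_vec w0 \<and> (\<forall>c' w'. pos_vec w' \<longrightarrow> boxset c' w' \<subseteq> boxset c2 w2 \<longrightarrow>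
          (\<forall>i. w' $ i \<le> w0 $ i) \<longrightarrow>
          dep_box p c1 w1 c' w' > dep_box p c1 w1 c2 w2 + \<Delta>)))
  \<and> (\<forall>(c::real^'n) w (N::nat) M. pos_vec w \<longrightarrow> N \<ge> 1 \<longrightarrow> M > 0 \<longrightarrow>
      (\<exists>cs ws. (\<forall>i\<in>{1..N}. pos_vec (ws i) \<and> boxset (cs i) (ws i) \<subseteq> boxset c w) \<and>
        (\<forall>i\<in>{1..N}. \<forall>j\<in>{1..N}. i \<noteq> j \<longrightarrow> dep_box p (cs i) (ws i) (cs j) (ws j) > M)))"
proof -
  have "0 \<le> p"
    using assms by simp
  show ?thesis
  proof (intro conjI allI impI)
    fix c1 c2 :: "real ^ 'n" and r1 r2 \<Delta> :: real
    assume "0 < r1"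
    then show "\<exists>r0 > 0. \<forall>c' r'. r' > 0 \<longrightarrow> ballset c' r' \<subseteq> ballset c2 r2 \<longrightarrow> r' \<le> r0 \<longrightarrow>
        dep_ball p c1 r1 c' r' > dep_ball p c1 r1 c2 r2 + \<Delta>"
      using dep_ball_gt_if_radius_small[OF \<open>0 \<le> p\<close>] by fast
  next
    fix c1 w1 c2 w2 :: "real ^ 'n" and \<Delta> :: real
    assume "pos_vec w1"
    then show "\<exists>w0. pos_vec w0 \<and> (\<forall>c' w'. pos_vec w' \<longrightarrow> boxset c' w' \<subseteq> boxset c2 w2 \<longrightarrow>
        (\<forall>i. w' $ i \<le> w0 $ i) \<longrightarrow> dep_box p c1 w1 c' w' > dep_box p c1 w1 c2 w2 + \<Delta>)"
      using dep_box_gt_if_widths_small[OF \<open>0 \<le> p\<close>] by fast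
  qed (use separated_subballs separated_subboxes \<open>0 \<le> p\<close> in blast)+
qed

end
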